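(* Let $J'=(z_w,z_w')$ be a nonempty open interval, let $r:J'\to\mathbb{R}$ be differentiable and non-increasing, and let $h:J'\to\mathbb{R}$ be differentiable with $\dot h(z)=1+h(z)^2-2r(z)h(z)$ on $J'$, having exactly one zero $z_*\in J'$. Let $G(z)=z-\dfrac{2h(z)}{2+h(z)^2-2r(z)h(z)}$. (1) If $0<r(z)<1$ for all $z\in(z_*,z_w')$, then $G$ is differentiable on $(z_*,z_w')$ and $\dot G(z)\ge 0$ for all $z\in(z_*,z_w')$. (2) If $-1<r(z)<0$ for all $z\in(z_w,z_* )$, then $G$ is differentiable on $(z_w,z_* )$ and $\dot G(z)\ge 0$ for all $z\in(z_w,z_* )$.
   Context: $\dot{}$ denotes differentiation with respect to $z$. Here $h<0$ on $(z_w,z_* )$ and $h>0$ on $(z_*,z_w')$ (consequence of $h(z_* )=0$, $\dot h(z_* )=1$ and uniqueness of the zero). *)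

theory Defs
  imports "HOL-Analysis.Analysis"
begin

end

theory Submission
  imports Defs
begin

text \<open>
  Writing \<open>H = h z\<close>, \<open>R = r z\<close>
  and \<open>D = 2 + H\<^sup>2 - 2 R H\<close>, the Riccati equation for \<open>h\<close> turns the quotient rule into
  \<open>G' = H\<^sup>2 (3 H\<^sup>2 - 8 R H + 4 R\<^sup>2 + 2 - 4 r') / D\<^sup>2\<close>. For \<open>\<bar>R\<bar> < 1\<close> both \<open>D\<close> and the
  quadratic \<open>3 H\<^sup>2 - 8 R H + 4 R\<^sup>2 + 2\<close> are positive (complete the square in \<open>H\<close>), and
  \<open>r' \<le> 0\<close> because \<open>r\<close> is non-increasing. The sign conditions on \<open>r\<close> in the two halves
  of the theorem are only used through \<open>\<bar>r\<bar> < 1\<close>.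
\<close>

lemma riccati_denominator_pos:
  fixes H R :: real
  assumes "\<bar>R\<bar> < 1"
  shows "0 < 2 + H\<^sup>2 - 2 * R * H"
proof -
  have "R\<^sup>2 < 1"
    using assms by (simp add: abs_square_less_1)
  moreover have "2 + H\<^sup>2 - 2 * R * H = (H - R)\<^sup>2 + (2 - R\<^sup>2)"
    by (simp add: power2_eq_square algebra_simps)
  ultimately show ?thesis
    using zero_le_power2[of "H - R"] by linarith
qed

lemma riccati_quotient_deriv_factor_nonneg:
  fixes H R :: real
  assumes "\<bar>R\<bar> < 1"
  shows "0 \<le> 3 * H\<^sup>2 - 8 * R * H + 4 * R\<^sup>2 + 2"
proof -
  have "R\<^sup>2 < 1"
    using assms by (simp add: abs_square_less_1)
  moreover have "3 * H\<^sup>2 - 8 * R * H + 4 * R\<^sup>2 + 2 = 3 * (H - 4/3 * R)\<^sup>2 + (2 - 4/3 * R\<^sup>2)"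
    by (simp add: power2_eq_square algebra_simps)
  ultimately show ?thesis
    using zero_le_power2[of "H - 4/3 * R"] by linarith
qed

lemma riccati_quotient_has_derivative:
  fixes r h :: "real \<Rightarrow> real"
  assumes h_ode: "(h has_real_derivative (1 + (h z)\<^sup>2 - 2 * r z * h z)) (at z)"
    and r_deriv: "(r has_real_derivative r') (at z)"
    and D_nz: "2 + (h z)\<^sup>2 - 2 * r z * h z \<noteq> 0"
  shows "((\<lambda>z. z - 2 * h z / (2 + (h z)\<^sup>2 - 2 * r z * h z)) has_real_derivative
           (h z)\<^sup>2 * (3 * (h z)\<^sup>2 - 8 * r z * h z + 4 * (r z)\<^sup>2 + 2 - 4 * r')
             / (2 + (h z)\<^sup>2 - 2 * r z * h z)\<^sup>2) (at z)"
proof -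
  define H R where "H = h z" and "R = r z"
  define h' D where "h' = 1 + H\<^sup>2 - 2 * R * H" and "D = 2 + H\<^sup>2 - 2 * R * H"
  define D' where "D' = 2 * H * h' - 2 * (r' * H + R * h')"
  have D_deriv: "((\<lambda>z. 2 + (h z)\<^sup>2 - 2 * r z * h z) has_real_derivative D') (at z)"
    unfolding D'_def h'_def H_def R_def by (auto intro!: derivative_eq_intros h_ode r_deriv)
  have G_deriv: "((\<lambda>z. z - 2 * h z / (2 + (h z)\<^sup>2 - 2 * r z * h z)) has_real_derivative
                   1 - (2 * h' * D - 2 * H * D') / D\<^sup>2) (at z)"
    by (rule DERIV_cong[OF DERIV_diff[OF DERIV_ident DERIV_divide[OF DERIV_cmult[OF h_ode] D_deriv D_nz]]])
      (simp add: h'_def D_def H_def R_def power2_eq_square)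
  have "D \<noteq> 0"
    using D_nz by (simp add: D_def H_def R_def)
  have "1 - (2 * h' * D - 2 * H * D') / D\<^sup>2 = (D\<^sup>2 - (2 * h' * D - 2 * H * D')) / D\<^sup>2"
    using \<open>D \<noteq> 0\<close> by (simp add: diff_divide_distrib)
  also have "\<dots> = H\<^sup>2 * (3 * H\<^sup>2 - 8 * R * H + 4 * R\<^sup>2 + 2 - 4 * r') / D\<^sup>2"
    unfolding D_def D'_def h'_def by (simp add: power2_eq_square algebra_simps)
  finally show ?thesis
    using G_deriv by (simp add: H_def R_def D_def)
qed

lemma riccati_quotient_deriv_nonneg:
  fixes r h :: "real \<Rightarrow> real"
  assumes h_ode: "(h has_real_derivative (1 + (h z)\<^sup>2 - 2 * r z * h z)) (at z)"
    and r_deriv: "(r has_real_derivative r') (at z)" and "r' \<le> 0"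
    and r_bound: "\<bar>r z\<bar> < 1"
  defines "G \<equiv> \<lambda>z. z - 2 * h z / (2 + (h z)\<^sup>2 - 2 * r z * h z)"
  shows "G differentiable (at z) \<and> deriv G z \<ge> 0"
proof -
  have "(G has_real_derivative (h z)\<^sup>2 * (3 * (h z)\<^sup>2 - 8 * r z * h z + 4 * (r z)\<^sup>2 + 2 - 4 * r')
          / (2 + (h z)\<^sup>2 - 2 * r z * h z)\<^sup>2) (at z)"
    unfolding G_def using riccati_denominator_pos[OF r_bound, of "h z"]
    by (intro riccati_quotient_has_derivative h_ode r_deriv) simp
  moreover have "0 \<le> (h z)\<^sup>2 * (3 * (h z)\<^sup>2 - 8 * r z * h z + 4 * (r z)\<^sup>2 + 2 - 4 * r')
                  / (2 + (h z)\<^sup>2 - 2 * r z * h z)\<^sup>2"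
    using riccati_quotient_deriv_factor_nonneg[OF r_bound, of "h z"] \<open>r' \<le> 0\<close> by simp
  ultimately show ?thesis
    using DERIV_imp_deriv real_differentiable_def by fastforce
qed

theorem lemma3p3:
  fixes r h :: "real \<Rightarrow> real" and zw zw' zs :: real
  assumes "zw < zw'"
    and r_diff: "\<forall>z\<in>{zw<..<zw'}. r differentiable (at z)"
    and r_noninc: "\<forall>x\<in>{zw<..<zw'}. \<forall>y\<in>{zw<..<zw'}. x \<le> y \<longrightarrow> r y \<le> r x"
    and h_ode: "\<forall>z\<in>{zw<..<zw'}. (h has_real_derivative (1 + (h z)\<^sup>2 - 2 * r z * h z)) (at z)"
    and zs_in: "zs \<in> {zw<..<zw'}" and h_zs: "h zs = 0"
    and zs_unique: "\<forall>z\<in>{zw<..<zw'}. h z = 0 \<longrightarrow> z = zs"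
  defines "G \<equiv> (\<lambda>z. z - 2 * h z / (2 + (h z)\<^sup>2 - 2 * r z * h z))"
  shows "((\<forall>z\<in>{zs<..<zw'}. 0 < r z \<and> r z < 1) \<longrightarrow>
            (\<forall>z\<in>{zs<..<zw'}. G differentiable (at z) \<and> deriv G z \<ge> 0))
       \<and> ((\<forall>z\<in>{zw<..<zs}. -1 < r z \<and> r z < 0) \<longrightarrow>
            (\<forall>z\<in>{zw<..<zs}. G differentiable (at z) \<and> deriv G z \<ge> 0))"
proof -
  have "G differentiable (at z) \<and> deriv G z \<ge> 0"
    if z: "z \<in> {zw<..<zw'}" and r_bound: "\<bar>r z\<bar> < 1" for z
  proof -
    obtain r' where r': "(r has_real_derivative r') (at z)"
      using r_diff z by (meson real_differentiable_def differentiable_def has_real_derivative_iff)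
    have "mono_on {zw<..<zw'} (\<lambda>z. - r z)"
      using r_noninc by (auto intro: mono_onI)
    then have "r' \<le> 0"
      using mono_on_imp_deriv_nonneg[OF _ DERIV_minus[OF r']] z by (simp add: interior_open)
    then show ?thesis
      unfolding G_def using h_ode z r' r_bound by (intro riccati_quotient_deriv_nonneg) auto
  qed
  then show ?thesis
    using zs_in by auto
qed

end
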